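(* Let $(\mathbf{L},\mathbf{R})\in\mathcal{P}_{\mathsf N}$ be superbalanced and suppose it admits a contraction map. Then for all $i,j\in[\mathsf N+1]$, the null reduction on $i$ of the purification on $j$ of $(\mathbf{L},\mathbf{R})$ admits a contraction map (or is empty).
   Context: $\mathcal{P}_{\mathsf N}$ denotes the set of pairs $(\mathbf{L},\mathbf{R})$ of $(0,1)$-matrices, $\mathbf{L}$ of size $(\mathsf N+1)\times m_L$ and $\mathbf{R}$ of size $(\mathsf N+1)\times m_R$, such that some index $p\in[\mathsf N+1]$ has row $p$ of $\mathbf{L}$ and row $p$ of $\mathbf{R}$ both zero. $\mathbf{A}_{(i)}$ denotes the $i$-th row of $\mathbf{A}$; $e$ is the all-ones row vector; $|x-x'|$ is the Hamming distance of bit strings. A contraction map for $(\mathbf{L},\mathbf{R})$ is a map $f:\{0,1\}^{m_L}\to\{0,1\}^{m_R}$ with $f(\mathbf{L}_{(i)})=\mathbf{R}_{(i)}$ for all $i$ and $|x-x'|\ge|f(x)-f(x')|$ for all $x,x'$. The pair is superbalanced if $\mathbf{L}_{(i)}\cdot\mathbf{L}_{(j)}=\mathbf{R}_{(i)}\cdot\mathbf{R}_{(j)}$ for all $i,j$. The purification on $j$ of $(\mathbf{L},\mathbf{R})$ is the pair $(\mathbf{L}+_2 e^T\mathbf{L}_{(j)},\ \mathbf{R}+_2 e^T\mathbf{R}_{(j)})$, where $+_2$ is entrywise addition mod 2; i.e. every column of $\mathbf{L}$ (resp. $\mathbf{R}$) with a $1$ in row $j$ is bit-flipped entirely, and other columns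 are unchanged (row $j$ becomes zero in both). The null reduction on $i$ of a pair keeps exactly the columns of each matrix that have a $1$ in row $i$. *)

theory Defs
  imports Main
begin

text \<open>A (0,1)-matrix with N+1 rows (indexed 0..N) and m columns is represented
  as the list of its m columns, each column a bool list of length N+1
  (True = 1).\<close>

type_synonym bmat = "bool list list"

definition wf_mat :: "nat \<Rightarrow> bmat \<Rightarrow> bool" where
  "wf_mat n A \<longleftrightarrow> (\<forall>c\<in>set A. length c = n)"

definition ncols :: "bmat \<Rightarrow> nat" where
  "ncols A = length A"

definition row :: "bmat \<Rightarrow> nat \<Rightarrow> bool list" where
  "row A i = map (\<lambda>c. c ! i) A"

definition hamming :: "bool list \<Rightarrow> bool list \<Rightarrow> nat" where
  "hamming x y = card {k. k < length x \<and> x ! k \<noteq> y ! k}"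

definition dot :: "bool list \<Rightarrow> bool list \<Rightarrow> nat" where
  "dot x y = card {k. k < length x \<and> x ! k \<and> y ! k}"

definition in_P :: "nat \<Rightarrow> bmat \<Rightarrow> bmat \<Rightarrow> bool" where
  "in_P N L R \<longleftrightarrow> wf_mat (N+1) L \<and> wf_mat (N+1) R \<and>
     (\<exists>p < N+1. (\<forall>c\<in>set L. \<not> c ! p) \<and> (\<forall>c\<in>set R. \<not> c ! p))"

definition superbalanced :: "nat \<Rightarrow> bmat \<Rightarrow> bmat \<Rightarrow> bool" where
  "superbalanced N L R \<longleftrightarrow>
     (\<forall>i < N+1. \<forall>j < N+1. dot (row L i) (row L j) = dot (row R i) (row R j))"

definition contraction_map :: "nat \<Rightarrow> bmat \<Rightarrow> bmat \<Rightarrow> (bool list \<Rightarrow> bool list) \<Rightarrow> bool" where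
  "contraction_map N L R f \<longleftrightarrow>
     (\<forall>x. length x = ncols L \<longrightarrow> length (f x) = ncols R) \<and>
     (\<forall>i < N+1. f (row L i) = row R i) \<and>
     (\<forall>x x'. length x = ncols L \<longrightarrow> length x' = ncols L \<longrightarrow>
        hamming (f x) (f x') \<le> hamming x x')"

definition admits_contraction :: "nat \<Rightarrow> bmat \<Rightarrow> bmat \<Rightarrow> bool" where
  "admits_contraction N L R \<longleftrightarrow> (\<exists>f. contraction_map N L R f)"

definition purify :: "nat \<Rightarrow> bmat \<Rightarrow> bmat" where
  "purify j A = map (\<lambda>c. if c ! j then map Not c else c) A"

definition null_reduce :: "nat \<Rightarrow> bmat \<Rightarrow> bmat" where
  "null_reduce i A = filter (\<lambda>c. c ! i) A"

end

theory Submission imports Defs begin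

(* Purification on j conjugates the pair by the translations x \<mapsto> x + L_(j) and
   y \<mapsto> y + R_(j), which are Hamming isometries.  Hence it preserves contraction
   maps, by polarization it preserves superbalance, and it makes row j zero on both
   sides.  For a superbalanced pair with a common zero row, a contraction map f
   sends the meet L_(k) \<and> L_(i) to R_(k) \<and> R_(i): the image is at most as far from
   R_(k), R_(i) and 0 as the meet is from L_(k), L_(i) and 0, and R_(k) \<and> R_(i) is
   the unique point of the cube that close to those three points (their median).
   So f maps strings supported on the support of L_(i) to strings supported on the
   support of R_(i), and its restriction is a contraction map for the null
   reduction on i. *)

lemma card_less_Suc_split:
  "card {k. k < Suc n \<and> P k} = (if P 0 then 1 else 0) + card {k. k < n \<and> P (Suc k)}"
proof -
  have "{k. k < Suc n \<and> P k} = (if P 0 then {0} else {}) \<union> Suc ` {k. k < n \<and> P (Suc k)}"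
    by (auto simp: less_Suc_eq_0_disj)
  then show ?thesis
    by (auto simp: card_insert_if card_image)
qed

lemma hamming_Nil [simp]: "hamming [] y = 0"
  by (simp add: hamming_def)

lemma hamming_Cons [simp]: "hamming (a # x) (b # y) = (if a = b then 0 else 1) + hamming x y"
  unfolding hamming_def by (simp add: card_less_Suc_split)

lemma dot_Nil [simp]: "dot [] y = 0"
  by (simp add: dot_def)

lemma dot_Cons [simp]: "dot (a # x) (b # y) = (if a \<and> b then 1 else 0) + dot x y"
  unfolding dot_def by (simp add: card_less_Suc_split)

lemma hamming_replicate_False: "hamming x (replicate (length x) False) = dot x x"
  by (induct x) auto

lemma hamming_add_dot:
  "length x = length y \<Longrightarrow> hamming x y + 2 * dot x y = dot x x + dot y y"
  by (induct x y rule: list_induct2) auto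

definition bxor :: "bool list \<Rightarrow> bool list \<Rightarrow> bool list" where
  "bxor x y = map2 (\<noteq>) x y"

definition band :: "bool list \<Rightarrow> bool list \<Rightarrow> bool list" where
  "band x y = map2 (\<and>) x y"

lemma bxor_Nil [simp]: "bxor [] y = []"
  by (simp add: bxor_def)

lemma bxor_Cons [simp]: "bxor (a # x) (b # y) = (a \<noteq> b) # bxor x y"
  by (simp add: bxor_def)

lemma band_Nil [simp]: "band [] y = []"
  by (simp add: band_def)

lemma band_Cons [simp]: "band (a # x) (b # y) = (a \<and> b) # band x y"
  by (simp add: band_def)

lemma length_bxor [simp]: "length (bxor x y) = min (length x) (length y)"
  by (simp add: bxor_def)

lemma length_band [simp]: "length (band x y) = min (length x) (length y)"
  by (simp add: band_def)

lemma bxor_bxor_cancel: "length x = length a \<Longrightarrow> bxor (bxor x a) a = x"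
  by (induct x a rule: list_induct2) auto

lemma bxor_self: "bxor x x = replicate (length x) False"
  by (induct x) auto

lemma hamming_bxor_right:
  "length x = length y \<Longrightarrow> length y = length a \<Longrightarrow> hamming (bxor x a) (bxor y a) = hamming x y"
  by (induct x y a rule: list_induct3) auto

lemma dot_bxor_bxor:
  "length x = length y \<Longrightarrow> length y = length z \<Longrightarrow>
   2 * dot (bxor x z) (bxor y z) + hamming x y = hamming x z + hamming y z"
  by (induct x y z rule: list_induct3) auto

lemma dot_band_self: "length a = length b \<Longrightarrow> dot (band a b) (band a b) = dot a b"
  by (induct a b rule: list_induct2) auto

lemma hamming_band_left: "length a = length b \<Longrightarrow> hamming (band a b) a + dot a b = dot a a"
  by (induct a b rule: list_induct2) auto

lemma hamming_band_right: "length a = length b \<Longrightarrow> hamming (band a b) b + dot a b = dot b b"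
  by (induct a b rule: list_induct2) auto

text \<open>Since dot y y is the distance from y to the zero string, the next two lemmas say
  that band A B is the unique minimiser of the total distance to A, B and 0, i.e. the
  median of these three points.\<close>

lemma hamming_median_lower_bound:
  "length y = length A \<Longrightarrow> length A = length B \<Longrightarrow>
   hamming A B + dot A B \<le> hamming y A + hamming y B + dot y y"
  by (induct y A B rule: list_induct3) auto

lemma hamming_median_unique:
  "length y = length A \<Longrightarrow> length A = length B \<Longrightarrow>
   hamming y A + hamming y B + dot y y \<le> hamming A B + dot A B \<Longrightarrow> y = band A B"
proof (induct y A B rule: list_induct3)
  case Nil
  then show ?case by simp
next
  case (Cons y0 y a A b B)
  have "hamming A B + dot A B \<le> hamming y A + hamming y B + dot y y"
    using Cons.hyps(1,2) by (rule hamming_median_lower_bound)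
  with Cons.prems Cons.hyps(3) show ?case
    by (auto split: if_splits)
qed

definition compress :: "bool list \<Rightarrow> bool list \<Rightarrow> bool list" where
  "compress m x = map snd (filter fst (zip m x))"

fun expand :: "bool list \<Rightarrow> bool list \<Rightarrow> bool list" where
  "expand [] ys = []"
| "expand (False # ms) ys = False # expand ms ys"
| "expand (True # ms) [] = False # expand ms []"
| "expand (True # ms) (y # ys) = y # expand ms ys"

lemma compress_Nil [simp]: "compress [] y = []"
  by (simp add: compress_def)

lemma compress_Cons [simp]:
  "compress (a # m) (b # y) = (if a then b # compress m y else compress m y)"
  by (simp add: compress_def)

lemma length_compress: "length m = length x \<Longrightarrow> length (compress m x) = length (filter id m)"
  by (induct m x rule: list_induct2) auto

lemma length_expand [simp]: "length (expand m y) = length m"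
  by (induct m y rule: expand.induct) auto

lemma expand_compress: "length x = length m \<Longrightarrow> expand m (compress m x) = band x m"
  by (induct x m rule: list_induct2) auto

lemma compress_band: "length x = length m \<Longrightarrow> compress m (band x m) = compress m x"
  by (induct x m rule: list_induct2) auto

lemma hamming_compress_le:
  "length m = length x \<Longrightarrow> length x = length x' \<Longrightarrow>
   hamming (compress m x) (compress m x') \<le> hamming x x'"
  by (induct m x x' rule: list_induct3) auto

lemma hamming_expand_le:
  "length y = length (filter id m) \<Longrightarrow> length y' = length (filter id m) \<Longrightarrow>
   hamming (expand m y) (expand m y') \<le> hamming y y'"
proof (induct m arbitrary: y y')
  case Nil
  then show ?case by simp
next
  case (Cons a m)
  show ?case
  proof (cases a)
    case False
    with Cons show ?thesis by simp
  next
    case True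
    with Cons.prems obtain b ys b' ys' where yy: "y = b # ys" "y' = b' # ys'"
      by (cases y; cases y') auto
    with True Cons.prems Cons.hyps[of ys ys'] show ?thesis by simp
  qed
qed

lemma length_row [simp]: "length (row A k) = length A"
  by (simp add: row_def)

lemma length_purify [simp]: "length (purify j A) = length A"
  by (simp add: purify_def)

lemma row_purify:
  assumes "wf_mat n A" "k < n" "j < n"
  shows "row (purify j A) k = bxor (row A k) (row A j)"
proof -
  have "(if c ! j then map Not c else c) ! k = (c ! k \<noteq> c ! j)" if "c \<in> set A" for c
    using that assms by (auto simp: wf_mat_def)
  then show ?thesis
    by (simp add: row_def purify_def bxor_def map2_map_map)
qed

lemma row_purify_self: "wf_mat n A \<Longrightarrow> j < n \<Longrightarrow> row (purify j A) j = replicate (ncols A) False"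
  by (simp add: row_purify bxor_self ncols_def)

lemma row_null_reduce: "row (null_reduce i A) k = compress (row A i) (row A k)"
  by (induct A) (auto simp: row_def null_reduce_def)

lemma length_null_reduce: "length (null_reduce i A) = length (filter id (row A i))"
  by (induct A) (auto simp: ncols_def null_reduce_def row_def)

lemma contraction_map_purify:
  assumes f: "contraction_map N L R f" and "wf_mat (N+1) L" "wf_mat (N+1) R" "j < N+1"
  shows "contraction_map N (purify j L) (purify j R) (\<lambda>x. bxor (f (bxor x (row L j))) (row R j))"
proof -
  have len: "\<And>x. length x = ncols L \<Longrightarrow> length (f x) = ncols R"
    and rows: "\<And>i. i < N+1 \<Longrightarrow> f (row L i) = row R i"
    and nonexp: "\<And>x x'. length x = ncols L \<Longrightarrow> length x' = ncols L \<Longrightarrow>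
        hamming (f x) (f x') \<le> hamming x x'"
    using f unfolding contraction_map_def by blast+
  have "hamming (bxor (f (bxor x (row L j))) (row R j)) (bxor (f (bxor x' (row L j))) (row R j))
        \<le> hamming x x'" if "length x = ncols L" "length x' = ncols L" for x x'
  proof -
    have "length (bxor x (row L j)) = ncols L" "length (bxor x' (row L j)) = ncols L"
      using that by (simp_all add: ncols_def)
    note translated = this len[OF this(1)] len[OF this(2)]
    have "hamming (bxor (f (bxor x (row L j))) (row R j)) (bxor (f (bxor x' (row L j))) (row R j))
        = hamming (f (bxor x (row L j))) (f (bxor x' (row L j)))"
      using translated by (intro hamming_bxor_right) (simp_all add: ncols_def)
    also have "\<dots> \<le> hamming (bxor x (row L j)) (bxor x' (row L j))"
      using nonexp[OF translated(1,2)] .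
    also have "\<dots> = hamming x x'"
      using that by (intro hamming_bxor_right) (simp_all add: ncols_def)
    finally show ?thesis .
  qed
  moreover have "bxor (f (bxor (row (purify j L) i) (row L j))) (row R j) = row (purify j R) i"
    if "i < N+1" for i
    using that assms rows[OF that] by (simp add: row_purify bxor_bxor_cancel)
  ultimately show ?thesis
    using len unfolding contraction_map_def by (auto simp: ncols_def)
qed

lemma superbalanced_hamming_rows:
  assumes "superbalanced N L R" "k < N+1" "l < N+1"
  shows "hamming (row L k) (row L l) = hamming (row R k) (row R l)"
  using hamming_add_dot[of "row L k" "row L l"] hamming_add_dot[of "row R k" "row R l"] assms
  unfolding superbalanced_def by auto

lemma superbalanced_purify:
  assumes sb: "superbalanced N L R" and wf: "wf_mat (N+1) L" "wf_mat (N+1) R" and j: "j < N+1"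
  shows "superbalanced N (purify j L) (purify j R)"
  unfolding superbalanced_def
proof (intro allI impI)
  fix k l assume k: "k < N+1" and l: "l < N+1"
  show "dot (row (purify j L) k) (row (purify j L) l) = dot (row (purify j R) k) (row (purify j R) l)"
    using dot_bxor_bxor[of "row L k" "row L l" "row L j"] dot_bxor_bxor[of "row R k" "row R l" "row R j"]
      superbalanced_hamming_rows[OF sb k l] superbalanced_hamming_rows[OF sb k j]
      superbalanced_hamming_rows[OF sb l j] row_purify[OF _ k j] row_purify[OF _ l j] wf
    by simp
qed

lemma nonexpansive_maps_band_to_band:
  fixes g :: "bool list \<Rightarrow> bool list"
  assumes nonexp: "\<And>x x'. length x = n \<Longrightarrow> length x' = n \<Longrightarrow> hamming (g x) (g x') \<le> hamming x x'"
    and len: "\<And>x. length x = n \<Longrightarrow> length (g x) = k"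
    and lengths: "length a = n" "length b = n" "length A = k" "length B = k"
    and images: "g a = A" "g b = B" "g (replicate n False) = replicate k False"
    and dots: "dot a a = dot A A" "dot b b = dot B B" "dot a b = dot A B"
  shows "g (band a b) = band A B"
proof -
  define z where "z = band a b"
  have z: "length z = n"
    by (simp add: z_def lengths)
  have "hamming (g z) A \<le> hamming z a" "hamming (g z) B \<le> hamming z b"
    using nonexp[OF z] images lengths by metis+
  moreover have "dot (g z) (g z) \<le> dot z z"
    using nonexp[OF z, of "replicate n False"] images(3) len[OF z] z
      hamming_replicate_False[of z] hamming_replicate_False[of "g z"]
    by simp
  moreover have "hamming z a + dot a b = dot a a" "hamming z b + dot a b = dot b b"
    "dot z z = dot a b"
    unfolding z_def using lengths
    by (simp_all add: hamming_band_left hamming_band_right dot_band_self)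
  moreover have "hamming A B + 2 * dot A B = dot A A + dot B B"
    using lengths by (simp add: hamming_add_dot)
  ultimately have median: "hamming (g z) A + hamming (g z) B + dot (g z) (g z) \<le> hamming A B + dot A B"
    using dots by linarith
  have "length (g z) = length A" "length A = length B"
    using len[OF z] lengths by simp_all
  from hamming_median_unique[OF this median] show ?thesis
    by (simp add: z_def)
qed

lemma admits_contraction_null_reduce:
  assumes g: "contraction_map N L R g" and sb: "superbalanced N L R"
    and i: "i < N+1" and j: "j < N+1"
    and zero_L: "row L j = replicate (ncols L) False"
    and zero_R: "row R j = replicate (ncols R) False"
  shows "admits_contraction N (null_reduce i L) (null_reduce i R)"
proof -
  have len: "\<And>x. length x = ncols L \<Longrightarrow> length (g x) = ncols R"
    and rows: "\<And>i. i < N+1 \<Longrightarrow> g (row L i) = row R i"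
    and nonexp: "\<And>x x'. length x = ncols L \<Longrightarrow> length x' = ncols L \<Longrightarrow>
        hamming (g x) (g x') \<le> hamming x x'"
    using g unfolding contraction_map_def by blast+
  have meet: "g (band (row L k) (row L i)) = band (row R k) (row R i)" if k: "k < N+1" for k
    using nonexp len rows[OF k] rows[OF i] rows[OF j] zero_L zero_R sb k i
    by (intro nonexpansive_maps_band_to_band) (auto simp: ncols_def superbalanced_def)
  define h where "h y = compress (row R i) (g (expand (row L i) y))" for y
  have expand_len: "length (expand (row L i) y) = ncols L" for y
    by (simp add: ncols_def)
  have "contraction_map N (null_reduce i L) (null_reduce i R) h"
    unfolding contraction_map_def
  proof (intro conjI allI impI)
    fix y :: "bool list"
    show "length (h y) = ncols (null_reduce i R)"
      using len[OF expand_len] by (simp add: h_def length_null_reduce length_compress ncols_def)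
  next
    fix k assume "k < N+1"
    then show "h (row (null_reduce i L) k) = row (null_reduce i R) k"
      using meet by (simp add: h_def row_null_reduce expand_compress compress_band)
  next
    fix y y' :: "bool list"
    assume "length y = ncols (null_reduce i L)" "length y' = ncols (null_reduce i L)"
    have "hamming (h y) (h y') \<le> hamming (g (expand (row L i) y)) (g (expand (row L i) y'))"
      unfolding h_def using len[OF expand_len] by (intro hamming_compress_le) (simp_all add: ncols_def)
    also have "\<dots> \<le> hamming (expand (row L i) y) (expand (row L i) y')"
      using nonexp[OF expand_len expand_len] .
    also have "\<dots> \<le> hamming y y'"
      using \<open>length y = ncols (null_reduce i L)\<close> \<open>length y' = ncols (null_reduce i L)\<close>
      by (intro hamming_expand_le) (simp_all add: length_null_reduce ncols_def)
    finally show "hamming (h y) (h y') \<le> hamming y y'" .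
  qed
  then show ?thesis
    unfolding admits_contraction_def by blast
qed

theorem corollary1:
  fixes N :: nat and L R :: bmat
  assumes "in_P N L R"
    and "superbalanced N L R"
    and "admits_contraction N L R"
    and "i < N + 1" and "j < N + 1"
  shows "admits_contraction N (null_reduce i (purify j L)) (null_reduce i (purify j R))
         \<or> (null_reduce i (purify j L) = [] \<and> null_reduce i (purify j R) = [])"
proof -
  have wf: "wf_mat (N+1) L" "wf_mat (N+1) R"
    using assms(1) by (simp_all add: in_P_def)
  obtain f where "contraction_map N L R f"
    using assms(3) by (auto simp: admits_contraction_def)
  then have "contraction_map N (purify j L) (purify j R) (\<lambda>x. bxor (f (bxor x (row L j))) (row R j))"
    using wf assms(5) by (rule contraction_map_purify)
  moreover have "superbalanced N (purify j L) (purify j R)"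
    using assms(2) wf assms(5) by (rule superbalanced_purify)
  ultimately have "admits_contraction N (null_reduce i (purify j L)) (null_reduce i (purify j R))"
    using assms(4,5) by (rule admits_contraction_null_reduce)
      (simp_all add: row_purify_self[OF wf(1) assms(5)] row_purify_self[OF wf(2) assms(5)] ncols_def)
  then show ?thesis ..
qed

end
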